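(* Let $\mathbb{R}^n_s$ be $\mathbb{R}^n$ with a non-degenerate symmetric bilinear form of signature $(n-s,s)$, let $G\subset\mathrm{Iso}(\mathbb{R}^n_s)$ be a real Zariski-closed subgroup whose centralizer $L=\mathrm{Z}_{\mathrm{Iso}(\mathbb{R}^n_s)}(G)$ acts transitively on $\mathbb{R}^n$, and let $U$ be the unipotent radical of $L$; assume $U$ acts transitively on $\mathbb{R}^n$. Fix $p\in\mathbb{R}^n$, let $F_p=G.p$, $U_p$ the stabilizer of $p$ in $U$, $U_{F_p}=\{u\in U\mid u.F_p\subseteq F_p\}$ (a subgroup containing $U_p$ as a normal subgroup) and $\tilde U=U_{F_p}/U_p$, acting on $U/U_p$ from the right by $uU_p\cdot \tilde u U_p=u\tilde uU_p$. Let $\Psi:U/U_p\to\mathbb{R}^n$, $uU_p\mapsto u.p$. Then $\Psi$ induces a bijection from the set of orbits of the right action of $\tilde U$ on $U/U_p$ to the set of orbits of $G$ on $\mathbb{R}^n$; more precisely, $\Psi$ maps the orbit $uU_p\cdot\tilde U$ onto the orbit $G.(u.p)$. *)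

theory Defs
  imports "HOL-Analysis.Analysis"
begin

text \<open>Isometries of R^n with the bilinear form (x,y) |-> x^T Q y, represented as
  pairs (A,b) standing for the affine map x |-> A x + b with A^T Q A = Q.\<close>

type_synonym 'n aff = "(real^'n^'n) \<times> (real^'n)"

definition iso_act :: "'n::finite aff \<Rightarrow> real^'n \<Rightarrow> real^'n" where
  "iso_act g x = fst g *v x + snd g"

definition iso_mult :: "'n::finite aff \<Rightarrow> 'n aff \<Rightarrow> 'n aff" where
  "iso_mult g h = (fst g ** fst h, fst g *v snd h + snd g)"

definition iso_one :: "'n::finite aff" where
  "iso_one = (mat 1, 0)"

definition iso_inv :: "'n::finite aff \<Rightarrow> 'n aff" where
  "iso_inv g = (matrix_inv (fst g), - (matrix_inv (fst g) *v snd g))"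

definition Iso :: "real^'n^'n \<Rightarrow> 'n::finite aff set" where
  "Iso Q = {g. transpose (fst g) ** Q ** fst g = Q}"

definition is_subgroup :: "real^'n^'n \<Rightarrow> 'n::finite aff set \<Rightarrow> bool" where
  "is_subgroup Q H \<longleftrightarrow> H \<subseteq> Iso Q \<and> iso_one \<in> H \<and>
     (\<forall>x\<in>H. \<forall>y\<in>H. iso_mult x y \<in> H) \<and> (\<forall>x\<in>H. iso_inv x \<in> H)"

definition is_normal_in :: "'n::finite aff set \<Rightarrow> 'n aff set \<Rightarrow> bool" where
  "is_normal_in H K \<longleftrightarrow> H \<subseteq> K \<and>
     (\<forall>k\<in>K. \<forall>h\<in>H. iso_mult (iso_mult k h) (iso_inv k) \<in> H)"

inductive_set poly_fun :: "('n::finite aff \<Rightarrow> real) set" where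
  pf_const: "(\<lambda>_. c) \<in> poly_fun"
| pf_mat: "(\<lambda>g. fst g $ i $ j) \<in> poly_fun"
| pf_vec: "(\<lambda>g. snd g $ i) \<in> poly_fun"
| pf_add: "f \<in> poly_fun \<Longrightarrow> h \<in> poly_fun \<Longrightarrow> (\<lambda>g. f g + h g) \<in> poly_fun"
| pf_mult: "f \<in> poly_fun \<Longrightarrow> h \<in> poly_fun \<Longrightarrow> (\<lambda>g. f g * h g) \<in> poly_fun"

definition zariski_closed :: "'n::finite aff set \<Rightarrow> bool" where
  "zariski_closed S \<longleftrightarrow> (\<exists>P \<subseteq> poly_fun. S = {g. \<forall>f\<in>P. f g = 0})"

definition zariski_connected :: "'n::finite aff set \<Rightarrow> bool" where
  "zariski_connected H \<longleftrightarrow>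
     \<not> (\<exists>C1 C2. zariski_closed C1 \<and> zariski_closed C2 \<and> H \<subseteq> C1 \<union> C2 \<and>
              H \<inter> C1 \<inter> C2 = {} \<and> H \<inter> C1 \<noteq> {} \<and> H \<inter> C2 \<noteq> {})"

text \<open>(A,b) is unipotent iff the linear part A is unipotent, i.e. A - I is nilpotent
  (equivalently the (n+1)x(n+1) matrix [[A,b],[0,1]] is unipotent).\<close>
definition unipotent :: "'n::finite aff \<Rightarrow> bool" where
  "unipotent g \<longleftrightarrow> (\<exists>k. ((\<lambda>M. (fst g - mat 1) ** M) ^^ k) (mat 1) = 0)"

definition conn_normal_unip_subgroup :: "real^'n^'n \<Rightarrow> 'n::finite aff set \<Rightarrow> 'n aff set \<Rightarrow> bool" where
  "conn_normal_unip_subgroup Q L V \<longleftrightarrow> is_subgroup Q V \<and> is_normal_in V L \<and>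
     zariski_closed V \<and> zariski_connected V \<and> (\<forall>v\<in>V. unipotent v)"

definition unipotent_radical :: "real^'n^'n \<Rightarrow> 'n::finite aff set \<Rightarrow> 'n aff set \<Rightarrow> bool" where
  "unipotent_radical Q L U \<longleftrightarrow> conn_normal_unip_subgroup Q L U \<and>
     (\<forall>V. conn_normal_unip_subgroup Q L V \<longrightarrow> V \<subseteq> U)"

definition centralizer :: "real^'n^'n \<Rightarrow> 'n::finite aff set \<Rightarrow> 'n aff set" where
  "centralizer Q G = {l \<in> Iso Q. \<forall>g\<in>G. iso_mult l g = iso_mult g l}"

definition orbit :: "'n::finite aff set \<Rightarrow> real^'n \<Rightarrow> (real^'n) set" where
  "orbit G x = (\<lambda>g. iso_act g x) ` G"

definition stabilizer :: "'n::finite aff set \<Rightarrow> real^'n \<Rightarrow> 'n aff set" where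
  "stabilizer U p = {u \<in> U. iso_act u p = p}"

definition set_stabilizer :: "'n::finite aff set \<Rightarrow> (real^'n) set \<Rightarrow> 'n aff set" where
  "set_stabilizer U F = {u \<in> U. iso_act u ` F \<subseteq> F}"

definition lcoset :: "'n::finite aff \<Rightarrow> 'n aff set \<Rightarrow> 'n aff set" where
  "lcoset u H = (\<lambda>v. iso_mult u v) ` H"

text \<open>Orbit of uU_p under the right action of U_F/U_p: {u w U_p | w in U_F}.\<close>
definition right_orbit :: "'n::finite aff \<Rightarrow> 'n aff set \<Rightarrow> 'n aff set \<Rightarrow> 'n aff set set" where
  "right_orbit u UF Up = {lcoset (iso_mult u w) Up | w. w \<in> UF}"

definition Psi :: "'n::finite aff set \<Rightarrow> 'n aff set \<Rightarrow> real^'n \<Rightarrow> 'n aff set \<Rightarrow> real^'n" where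
  "Psi U Up p C = iso_act (SOME u. u \<in> U \<and> C = lcoset u Up) p"

end

theory Submission
  imports Defs
begin

text \<open>Since U centralizes G, each u \<in> U maps G-orbits onto G-orbits: u.(G.p) = G.(u.p).
  Hence U_F is exactly the set of u \<in> U with u.p \<in> F, so transitivity of U gives U_F.p = F
  and \<Psi> maps the right orbit of uU_p onto u.F = G.(u.p). Conversely, if G.(u.p) = G.(u'.p)
  then u\<inverse>u' moves p inside F, i.e. lies in U_F, so uU_p and u'U_p lie in the same right
  orbit; this gives injectivity, and transitivity of U gives surjectivity.\<close>

lemma iso_act_mult: "iso_act (iso_mult g h) x = iso_act g (iso_act h x)"
  by (simp add: iso_act_def iso_mult_def matrix_vector_mul_assoc matrix_vector_right_distrib add.assoc)

lemma iso_mult_assoc: "iso_mult (iso_mult a b) c = iso_mult a (iso_mult b c)"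
  by (simp add: iso_mult_def matrix_mul_assoc matrix_vector_mul_assoc matrix_vector_right_distrib add.assoc)

lemma iso_mult_one_left [simp]: "iso_mult iso_one u = u"
  by (simp add: iso_mult_def iso_one_def)

lemma iso_mult_one_right [simp]: "iso_mult u iso_one = u"
  by (simp add: iso_mult_def iso_one_def)

lemma iso_act_one [simp]: "iso_act iso_one x = x"
  by (simp add: iso_act_def iso_one_def)

lemma invertible_fst_if_in_Iso:
  assumes "invertible Q" "u \<in> Iso Q"
  shows "invertible (fst u)"
proof -
  have "det (fst u) * det Q * det (fst u) = det Q"
    using assms(2) det_mul[of "transpose (fst u) ** Q" "fst u"]
    by (simp add: Iso_def det_mul det_transpose)
  moreover have "det Q \<noteq> 0" using assms(1) by (simp add: invertible_det_nz)
  ultimately show ?thesis by (auto simp: invertible_det_nz)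
qed

lemma inj_iso_act: "invertible (fst u) \<Longrightarrow> inj (iso_act u)"
  unfolding iso_act_def by (auto intro!: injI dest: injD[OF inj_matrix_vector_mult])

lemma iso_mult_inv_right:
  assumes "invertible (fst u)"
  shows "iso_mult u (iso_inv u) = iso_one"
proof -
  have "fst u ** matrix_inv (fst u) = mat 1"
    using assms unfolding invertible_def matrix_inv_def by (rule someI_ex[THEN conjunct1])
  moreover have "fst u *v (- (matrix_inv (fst u) *v snd u)) = - (fst u *v (matrix_inv (fst u) *v snd u))"
    by (simp add: vec_eq_iff matrix_vector_mult_def sum_negf)
  ultimately show ?thesis
    by (simp add: iso_mult_def iso_inv_def iso_one_def matrix_vector_mul_assoc)
qed

lemma iso_mult_inv_cancel_left:
  "invertible (fst u) \<Longrightarrow> iso_mult u (iso_mult (iso_inv u) v) = v"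
  by (metis iso_mult_assoc iso_mult_inv_right iso_mult_one_left)

lemma self_in_orbit: "iso_one \<in> G \<Longrightarrow> x \<in> orbit G x"
  unfolding orbit_def by (metis iso_act_one image_eqI)

lemma set_stabilizer_mult:
  assumes "\<And>u v. u \<in> U \<Longrightarrow> v \<in> U \<Longrightarrow> iso_mult u v \<in> U"
    and "u \<in> set_stabilizer U F" "v \<in> set_stabilizer U F"
  shows "iso_mult u v \<in> set_stabilizer U F"
  using assms by (auto simp: set_stabilizer_def iso_act_mult image_subset_iff)

text \<open>\<Psi> is well defined on cosets: any representative chosen by SOME differs from u by
  an element of U_p, which fixes p.\<close>
lemma Psi_lcoset:
  assumes "u \<in> U" "iso_one \<in> U"
  shows "Psi U (stabilizer U p) p (lcoset u (stabilizer U p)) = iso_act u p"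
proof -
  let ?Up = "stabilizer U p"
  define v where "v = (SOME v. v \<in> U \<and> lcoset u ?Up = lcoset v ?Up)"
  have v: "v \<in> U \<and> lcoset u ?Up = lcoset v ?Up"
    unfolding v_def by (rule someI_ex) (use assms in blast)
  have "iso_one \<in> ?Up" using assms by (simp add: stabilizer_def)
  hence "v \<in> lcoset u ?Up" using v unfolding lcoset_def by (metis iso_mult_one_right image_eqI)
  then obtain s where "s \<in> ?Up" "v = iso_mult u s" unfolding lcoset_def by auto
  thus ?thesis unfolding Psi_def v_def[symmetric] by (simp add: iso_act_mult stabilizer_def)
qed

locale centralizing_subgroup =
  fixes Q :: "real^'n^'n" and G U :: "'n::finite aff set"
  assumes invertible_Q: "invertible Q"
    and subgroup_G: "is_subgroup Q G"
    and subgroup_U: "is_subgroup Q U"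
    and U_centralizes_G: "U \<subseteq> centralizer Q G"
begin

lemma one_G: "iso_one \<in> G" and mult_G: "g \<in> G \<Longrightarrow> h \<in> G \<Longrightarrow> iso_mult g h \<in> G"
  using subgroup_G by (auto simp: is_subgroup_def)

lemma one_U: "iso_one \<in> U" and mult_U: "u \<in> U \<Longrightarrow> v \<in> U \<Longrightarrow> iso_mult u v \<in> U"
  and inv_U: "u \<in> U \<Longrightarrow> iso_inv u \<in> U"
  using subgroup_U by (auto simp: is_subgroup_def)

lemma invertible_U: "u \<in> U \<Longrightarrow> invertible (fst u)"
  using subgroup_U invertible_Q by (auto simp: is_subgroup_def intro: invertible_fst_if_in_Iso)

lemma act_commute: "u \<in> U \<Longrightarrow> g \<in> G \<Longrightarrow> iso_act u (iso_act g x) = iso_act g (iso_act u x)"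
  using U_centralizes_G by (auto simp: centralizer_def iso_act_mult[symmetric])

lemma image_orbit: "u \<in> U \<Longrightarrow> iso_act u ` orbit G x = orbit G (iso_act u x)"
  unfolding orbit_def image_image by (intro image_cong) (auto simp: act_commute)

lemma orbit_subset: "y \<in> orbit G x \<Longrightarrow> orbit G y \<subseteq> orbit G x"
  unfolding orbit_def by (auto simp: iso_act_mult[symmetric] intro: mult_G)

lemma in_set_stabilizer_orbit_iff:
  "w \<in> set_stabilizer U (orbit G p) \<longleftrightarrow> w \<in> U \<and> iso_act w p \<in> orbit G p"
proof -
  have "iso_act w ` orbit G p \<subseteq> orbit G p \<longleftrightarrow> iso_act w p \<in> orbit G p" if "w \<in> U"
    using self_in_orbit[OF one_G] orbit_subset by (auto simp: image_orbit[OF that])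
  thus ?thesis by (auto simp: set_stabilizer_def)
qed

lemma act_set_stabilizer_orbit:
  assumes "\<forall>x y. \<exists>u\<in>U. iso_act u x = y"
  shows "(\<lambda>w. iso_act w p) ` set_stabilizer U (orbit G p) = orbit G p"
proof
  show "orbit G p \<subseteq> (\<lambda>w. iso_act w p) ` set_stabilizer U (orbit G p)"
  proof
    fix y assume "y \<in> orbit G p"
    moreover obtain w where "w \<in> U" "iso_act w p = y" using assms by blast
    ultimately show "y \<in> (\<lambda>w. iso_act w p) ` set_stabilizer U (orbit G p)"
      by (auto simp: in_set_stabilizer_orbit_iff)
  qed
qed (auto simp: in_set_stabilizer_orbit_iff)

lemma Psi_image_right_orbit:
  assumes "\<forall>x y. \<exists>u\<in>U. iso_act u x = y" "u \<in> U"
  shows "Psi U (stabilizer U p) p ` right_orbit u (set_stabilizer U (orbit G p)) (stabilizer U p)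
           = orbit G (iso_act u p)"
proof -
  let ?UF = "set_stabilizer U (orbit G p)"
  have "Psi U (stabilizer U p) p ` right_orbit u ?UF (stabilizer U p)
      = (\<lambda>w. Psi U (stabilizer U p) p (lcoset (iso_mult u w) (stabilizer U p))) ` ?UF"
    unfolding right_orbit_def by auto
  also have "\<dots> = iso_act u ` (\<lambda>w. iso_act w p) ` ?UF"
    unfolding image_image using assms(2)
    by (intro image_cong) (auto simp: Psi_lcoset one_U mult_U set_stabilizer_def iso_act_mult)
  also have "\<dots> = orbit G (iso_act u p)"
    using act_set_stabilizer_orbit[OF assms(1)] image_orbit[OF assms(2)] by simp
  finally show ?thesis .
qed

lemma right_orbit_mult_subset:
  assumes "w \<in> set_stabilizer U F"
  shows "right_orbit (iso_mult u w) (set_stabilizer U F) H \<subseteq> right_orbit u (set_stabilizer U F) H"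
proof
  fix C assume "C \<in> right_orbit (iso_mult u w) (set_stabilizer U F) H"
  then obtain v where "v \<in> set_stabilizer U F" "C = lcoset (iso_mult u (iso_mult w v)) H"
    by (auto simp: right_orbit_def iso_mult_assoc)
  with set_stabilizer_mult[OF mult_U assms] show "C \<in> right_orbit u (set_stabilizer U F) H"
    unfolding right_orbit_def by blast
qed

lemma right_orbit_subset_if_same_orbit:
  assumes "u \<in> U" "u' \<in> U" "orbit G (iso_act u p) = orbit G (iso_act u' p)"
  shows "right_orbit u' (set_stabilizer U (orbit G p)) H
           \<subseteq> right_orbit u (set_stabilizer U (orbit G p)) H"
proof -
  define w where "w = iso_mult (iso_inv u) u'"
  have u': "u' = iso_mult u w"
    unfolding w_def by (simp add: iso_mult_inv_cancel_left invertible_U assms(1))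
  have "iso_act u (iso_act w p) = iso_act u' p" using u' by (simp add: iso_act_mult)
  also have "\<dots> \<in> orbit G (iso_act u p)" using self_in_orbit[OF one_G] assms(3) by simp
  also have "\<dots> = iso_act u ` orbit G p" using image_orbit[OF assms(1)] by simp
  finally have "iso_act u (iso_act w p) \<in> iso_act u ` orbit G p" .
  hence "iso_act w p \<in> orbit G p"
    using inj_iso_act[OF invertible_U[OF assms(1)]] by (simp add: inj_image_mem_iff)
  hence "w \<in> set_stabilizer U (orbit G p)"
    using assms by (simp add: in_set_stabilizer_orbit_iff w_def inv_U mult_U)
  thus ?thesis using right_orbit_mult_subset u' by simp
qed

lemma bij_betw_right_orbits_orbits:
  assumes U_transitive: "\<forall>x y. \<exists>u\<in>U. iso_act u x = y"
  shows "bij_betw (\<lambda>Orb. Psi U (stabilizer U p) p ` Orb)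
           {right_orbit u (set_stabilizer U (orbit G p)) (stabilizer U p) | u. u \<in> U}
           {orbit G x | x. True}"
proof -
  let ?ro = "\<lambda>u. right_orbit u (set_stabilizer U (orbit G p)) (stabilizer U p)"
  note Psi_image = Psi_image_right_orbit[OF U_transitive]
  have "inj_on (\<lambda>Orb. Psi U (stabilizer U p) p ` Orb) {?ro u | u. u \<in> U}"
  proof (rule inj_onI, clarify)
    fix u u' assume "u \<in> U" "u' \<in> U"
      and "Psi U (stabilizer U p) p ` ?ro u = Psi U (stabilizer U p) p ` ?ro u'"
    hence "orbit G (iso_act u p) = orbit G (iso_act u' p)" by (simp add: Psi_image)
    thus "?ro u = ?ro u'"
      using \<open>u \<in> U\<close> \<open>u' \<in> U\<close>
      by (intro subset_antisym right_orbit_subset_if_same_orbit) simp_all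
  qed
  moreover have "(\<lambda>Orb. Psi U (stabilizer U p) p ` Orb) ` {?ro u | u. u \<in> U}
      = {orbit G x | x. True}"
  proof -
    have "(\<lambda>Orb. Psi U (stabilizer U p) p ` Orb) ` {?ro u | u. u \<in> U}
        = (\<lambda>u. orbit G (iso_act u p)) ` U"
      unfolding Setcompr_eq_image image_image by (intro image_cong) (simp_all add: Psi_image)
    also have "\<dots> = orbit G ` (\<lambda>u. iso_act u p) ` U" by (simp add: image_image)
    also have "(\<lambda>u. iso_act u p) ` U = UNIV"
    proof (rule sym, rule UNIV_eq_I)
      fix x
      obtain u where "u \<in> U" "iso_act u p = x" using U_transitive by blast
      thus "x \<in> (\<lambda>u. iso_act u p) ` U" by blast
    qed
    finally show ?thesis by auto
  qed
  ultimately show ?thesis unfolding bij_betw_def ..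
qed

end

theorem lemma6p7:
  fixes Q :: "real^'n^'n" and G L U :: "'n::finite aff set" and p :: "real^'n"
  assumes "transpose Q = Q" and "invertible Q"
    and "is_subgroup Q G" and "zariski_closed G"
    and "L = centralizer Q G"
    and "\<forall>x y. \<exists>l\<in>L. iso_act l x = y"
    and "unipotent_radical Q L U"
    and "\<forall>x y. \<exists>u\<in>U. iso_act u x = y"
  shows "(\<forall>u\<in>U. Psi U (stabilizer U p) p `
              (right_orbit u (set_stabilizer U (orbit G p)) (stabilizer U p))
            = orbit G (iso_act u p))
       \<and> bij_betw (\<lambda>Orb. Psi U (stabilizer U p) p ` Orb)
           {right_orbit u (set_stabilizer U (orbit G p)) (stabilizer U p) | u. u \<in> U}
           {orbit G x | x. True}"
proof -
  have "is_subgroup Q U" "U \<subseteq> centralizer Q G"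
    using assms(5,7) by (auto simp: unipotent_radical_def conn_normal_unip_subgroup_def is_normal_in_def)
  then interpret centralizing_subgroup Q G U
    using assms(2,3) by unfold_locales
  show ?thesis
    using Psi_image_right_orbit[OF assms(8)] bij_betw_right_orbits_orbits[OF assms(8)] by blast
qed

end
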